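(* Let $X$ be a CRSM on $E$ with extremal coefficient functional $\theta$. Then for all $K_1,K_2\in\mathcal K$ and $\varepsilon>0$, $$\mathbb P\{X(K_1)-X(K_2)\le\varepsilon\}\ge\exp\Big\{-\frac1\varepsilon\big(\theta(K_1\cup K_2)-\theta(K_2)\big)\Big\},$$ and consequently $$\mathbb P\{|X(K_1)-X(K_2)|>\varepsilon\}\le\frac1\varepsilon\big(2\theta(K_1\cup K_2)-\theta(K_1)-\theta(K_2)\big).$$
   Context: $E$ is a locally compact Hausdorff second countable space; $\mathcal K$ its compact subsets. A sup-measure on $E$ is a Choquet capacity $\varphi$ (non-decreasing, $\varphi(\emptyset)=0$, $\varphi(A_n)\uparrow\varphi(A)$ if $A_n\uparrow A$, $\varphi(K_n)\downarrow\varphi(K)$ for compact $K_n\downarrow K$), finite on compacts, with $\varphi(\bigcup_j G_j)=\sup_j\varphi(G_j)$ for all families of open sets; a random sup-measure is a random element of the space of sup-measures (Borel $\sigma$-algebra of the sup-vague topology). $\mathrm{USC}$: bounded non-negative upper semicontinuous functions with relatively compact support. Extremal integral $\int^e f\,d\varphi=\sup\{\varphi(K)\inf_{x\in K}f(x):K\in\mathcal K\}$. Unit Fréchet with scale $a\ge0$: distribution function $\exp(-a/t)$, $t>0$. $X$ is max-stable if $\bigvee_iu_iX(K_i)$ is unit Fréchet for all $K_i\in\mathcal K$, $u_i\ge0$; tail dependence functional $\ell(f)$ = scale of $\int^e f\,dX$; extremal coefficient functional $\theta(K)=\ell(\mathbf 1_K)$. $X$ is a CRSM if it is max-stable and $\ell(f+g)=\ell(f)+\ell(g)$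 for all $f,g\in\mathrm{USC}$ with $(f(x)-f(y))(g(x)-g(y))\ge0$ for all $x,y$. *)

theory Defs
  imports "HOL-Analysis.Analysis" "HOL-Probability.Probability"
begin

definition choquet_capacity :: "('a::topological_space set \<Rightarrow> ennreal) \<Rightarrow> bool" where
  "choquet_capacity \<phi> \<longleftrightarrow>
     mono \<phi> \<and> \<phi> {} = 0 \<and>
     (\<forall>A::nat \<Rightarrow> 'a set. incseq A \<longrightarrow> (\<lambda>n. \<phi> (A n)) \<longlonglongrightarrow> \<phi> (\<Union>n. A n)) \<and>
     (\<forall>K::nat \<Rightarrow> 'a set. decseq K \<longrightarrow> (\<forall>n. compact (K n)) \<longrightarrow>
        (\<lambda>n. \<phi> (K n)) \<longlonglongrightarrow> \<phi> (\<Inter>n. K n))"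

definition sup_measure :: "('a::topological_space set \<Rightarrow> ennreal) \<Rightarrow> bool" where
  "sup_measure \<phi> \<longleftrightarrow>
     choquet_capacity \<phi> \<and>
     (\<forall>K. compact K \<longrightarrow> \<phi> K < \<infinity>) \<and>
     (\<forall>\<G>. (\<forall>G\<in>\<G>. open G) \<longrightarrow> \<phi> (\<Union>\<G>) = (SUP G\<in>\<G>. \<phi> G))"

definition sup_vague_topology :: "('a::topological_space set \<Rightarrow> ennreal) topology" where
  "sup_vague_topology = topology_generated_by
     ({{\<phi>. sup_measure \<phi> \<and> \<phi> K < t} | K t. compact K} \<union>
      {{\<phi>. sup_measure \<phi> \<and> \<phi> G > t} | G t. open G})"

definition sup_measure_space :: "('a::topological_space set \<Rightarrow> ennreal) measure" where
  "sup_measure_space = sigma {\<phi>. sup_measure \<phi>} {U. openin sup_vague_topology U}"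

definition random_sup_measure ::
    "'w measure \<Rightarrow> ('w \<Rightarrow> 'a::topological_space set \<Rightarrow> ennreal) \<Rightarrow> bool" where
  "random_sup_measure M X \<longleftrightarrow> prob_space M \<and> X \<in> measurable M sup_measure_space"

definition unit_frechet_scale :: "'w measure \<Rightarrow> ('w \<Rightarrow> ennreal) \<Rightarrow> real \<Rightarrow> bool" where
  "unit_frechet_scale M Y a \<longleftrightarrow>
     a \<ge> 0 \<and> (\<forall>t::real. t > 0 \<longrightarrow> measure M {\<omega>\<in>space M. Y \<omega> \<le> ennreal t} = exp (- a / t))"

definition unit_frechet :: "'w measure \<Rightarrow> ('w \<Rightarrow> ennreal) \<Rightarrow> bool" where
  "unit_frechet M Y \<longleftrightarrow> (\<exists>a. unit_frechet_scale M Y a)"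

definition frechet_scale :: "'w measure \<Rightarrow> ('w \<Rightarrow> ennreal) \<Rightarrow> real" where
  "frechet_scale M Y = (THE a. unit_frechet_scale M Y a)"

definition max_stable :: "'w measure \<Rightarrow> ('w \<Rightarrow> 'a::topological_space set \<Rightarrow> ennreal) \<Rightarrow> bool" where
  "max_stable M X \<longleftrightarrow> random_sup_measure M X \<and>
     (\<forall>(I::nat set) (K::nat \<Rightarrow> 'a set) (u::nat \<Rightarrow> real).
        finite I \<longrightarrow> (\<forall>i\<in>I. compact (K i) \<and> u i \<ge> 0) \<longrightarrow>
        unit_frechet M (\<lambda>\<omega>. SUP i\<in>I. ennreal (u i) * X \<omega> (K i)))"

definition usc_fun :: "('a::topological_space \<Rightarrow> real) \<Rightarrow> bool" where
  "usc_fun f \<longleftrightarrow>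
     (\<forall>x. f x \<ge> 0) \<and> bounded (range f) \<and>
     (\<forall>t. open {x. f x < t}) \<and> compact (closure {x. f x \<noteq> 0})"

definition extremal_integral :: "('a::topological_space \<Rightarrow> real) \<Rightarrow> ('a set \<Rightarrow> ennreal) \<Rightarrow> ennreal" where
  "extremal_integral f \<phi> = (SUP K\<in>{K. compact K}. \<phi> K * (INF x\<in>K. ennreal (f x)))"

definition tail_dep :: "'w measure \<Rightarrow> ('w \<Rightarrow> 'a::topological_space set \<Rightarrow> ennreal) \<Rightarrow> ('a \<Rightarrow> real) \<Rightarrow> real" where
  "tail_dep M X f = frechet_scale M (\<lambda>\<omega>. extremal_integral f (X \<omega>))"

definition ext_coeff :: "'w measure \<Rightarrow> ('w \<Rightarrow> 'a::topological_space set \<Rightarrow> ennreal) \<Rightarrow> 'a set \<Rightarrow> real" where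
  "ext_coeff M X K = tail_dep M X (indicator K)"

definition comonotone :: "('a \<Rightarrow> real) \<Rightarrow> ('a \<Rightarrow> real) \<Rightarrow> bool" where
  "comonotone f g \<longleftrightarrow> (\<forall>x y. (f x - f y) * (g x - g y) \<ge> 0)"

definition CRSM :: "'w measure \<Rightarrow> ('w \<Rightarrow> 'a::topological_space set \<Rightarrow> ennreal) \<Rightarrow> bool" where
  "CRSM M X \<longleftrightarrow> max_stable M X \<and>
     (\<forall>f g. usc_fun f \<longrightarrow> usc_fun g \<longrightarrow> comonotone f g \<longrightarrow>
        tail_dep M X (\<lambda>x. f x + g x) = tail_dep M X f + tail_dep M X g)"

end

theory Submission
  imports Defs
begin

text \<open>Put \<open>U = X(K\<^sub>2)\<close>, \<open>W = X(K\<^sub>1 \<union> K\<^sub>2)\<close>, \<open>a = \<theta>(K\<^sub>2)\<close> and \<open>b = \<theta>(K\<^sub>1 \<union> K\<^sub>2)\<close>.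
Comonotone additivity of the tail dependence functional, applied to the nested step function
\<open>(1/r - 1/s) 1[K\<^sub>2] + (1/s) 1[K\<^sub>1 \<union> K\<^sub>2]\<close>, gives the joint law
\<open>P{U \<le> r, W \<le> s} = exp(-a/r - (b - a)/s)\<close> for \<open>r < s\<close>. This is the law of \<open>(U, max U V)\<close> with \<open>V\<close>
an independent Frechet variable of scale \<open>b - a\<close>, so \<open>W - U \<le> \<epsilon>\<close> should hold with probability at
least \<open>P{V \<le> \<epsilon>} = exp(-(b - a)/\<epsilon>)\<close>; this is verified directly from the joint law by summing it over
the grid \<open>U \<in> (m\<epsilon>, (m+1)\<epsilon>]\<close> and letting \<open>m \<rightarrow> \<infinity>\<close>. As \<open>X(K\<^sub>1) \<le> W\<close>, this is the first
inequality; the second follows from the first in both directions, a union bound and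
\<open>1 - exp(-x) \<le> x\<close>.\<close>

lemma openin_sup_vague_topology_subset:
  "openin sup_vague_topology U \<Longrightarrow> U \<subseteq> {\<phi>. sup_measure \<phi>}"
proof -
  assume "openin sup_vague_topology U"
  then have "U \<subseteq> topspace sup_vague_topology" by (rule openin_subset)
  also have "\<dots> \<subseteq> {\<phi>. sup_measure \<phi>}" unfolding sup_vague_topology_def
    by (subst topology_generated_by_topspace) auto
  finally show ?thesis .
qed

lemma space_sup_measure_space: "space sup_measure_space = {\<phi>. sup_measure \<phi>}"
  unfolding sup_measure_space_def
  by (rule space_measure_of) (use openin_sup_vague_topology_subset in auto)

lemma sup_measure_less_in_sets:
  assumes "compact K"
  shows "{\<phi>. sup_measure \<phi> \<and> \<phi> K < t} \<in> sets sup_measure_space"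
proof -
  have "openin sup_vague_topology {\<phi>. sup_measure \<phi> \<and> \<phi> K < t}"
    unfolding sup_vague_topology_def by (rule topology_generated_by_Basis) (use assms in blast)
  moreover have "{U. openin sup_vague_topology U} \<subseteq> Pow {\<phi>. sup_measure \<phi>}"
    using openin_sup_vague_topology_subset by auto
  ultimately show ?thesis unfolding sup_measure_space_def
    by (subst sets_measure_of) (auto intro!: sigma_sets.Basic)
qed

lemma random_sup_measure_sup_measure:
  assumes "random_sup_measure M X" "\<omega> \<in> space M"
  shows "sup_measure (X \<omega>)"
  using assms measurable_space[of X M sup_measure_space \<omega>] space_sup_measure_space
  unfolding random_sup_measure_def by auto

lemma random_sup_measure_borel_measurable:
  assumes "random_sup_measure M X" "compact K"
  shows "(\<lambda>\<omega>. X \<omega> K) \<in> borel_measurable M"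
proof (rule borel_measurableI_less)
  fix y
  have "{\<omega>\<in>space M. X \<omega> K < y} = X -` {\<phi>. sup_measure \<phi> \<and> \<phi> K < y} \<inter> space M"
    using random_sup_measure_sup_measure[OF assms(1)] by auto
  also have "\<dots> \<in> sets M"
    using assms sup_measure_less_in_sets[OF assms(2)] measurable_sets[of X M sup_measure_space]
    unfolding random_sup_measure_def by blast
  finally show "{\<omega>\<in>space M. X \<omega> K < y} \<in> sets M" .
qed

lemma sup_measure_mono: "sup_measure \<phi> \<Longrightarrow> mono \<phi>"
  and sup_measure_empty: "sup_measure \<phi> \<Longrightarrow> \<phi> {} = 0"
  and sup_measure_compact_finite: "sup_measure \<phi> \<Longrightarrow> compact K \<Longrightarrow> \<phi> K < \<infinity>"
  unfolding sup_measure_def choquet_capacity_def by auto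

lemma ennreal_mult_le_iff_le_divide:
  assumes "c > 0" "t > 0"
  shows "ennreal c * y \<le> ennreal t \<longleftrightarrow> y \<le> ennreal (t / c)"
proof (cases y)
  case (real r)
  then show ?thesis using assms
    by (simp add: ennreal_mult[symmetric] ennreal_le_iff2 field_simps)
next
  case top
  then show ?thesis using assms by (simp add: ennreal_mult_top top_unique)
qed

lemma unit_frechet_scale_cdf:
  "unit_frechet_scale M Y a \<Longrightarrow> t > 0 \<Longrightarrow> measure M {\<omega>\<in>space M. Y \<omega> \<le> ennreal t} = exp (- a / t)"
  unfolding unit_frechet_scale_def by blast

lemma unit_frechet_scale_unique:
  "unit_frechet_scale M Y a \<Longrightarrow> unit_frechet_scale M Y b \<Longrightarrow> a = b"
  using unit_frechet_scale_cdf[of M Y a 1] unit_frechet_scale_cdf[of M Y b 1] by simp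

lemma unit_frechet_scale_cong:
  assumes "unit_frechet_scale M Y a" "\<And>\<omega>. \<omega> \<in> space M \<Longrightarrow> Y' \<omega> = Y \<omega>"
  shows "unit_frechet_scale M Y' a"
proof -
  have "{\<omega>\<in>space M. Y' \<omega> \<le> ennreal t} = {\<omega>\<in>space M. Y \<omega> \<le> ennreal t}" for t
    using assms(2) by auto
  then show ?thesis using assms(1) unfolding unit_frechet_scale_def by simp
qed

lemma frechet_scale_eqI:
  "unit_frechet_scale M Y a \<Longrightarrow> (\<And>\<omega>. \<omega> \<in> space M \<Longrightarrow> Y' \<omega> = Y \<omega>) \<Longrightarrow> frechet_scale M Y' = a"
  unfolding frechet_scale_def
  by (metis (no_types, lifting) the_equality unit_frechet_scale_cong unit_frechet_scale_unique)

lemma unit_frechet_scale_frechet_scale: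
  "unit_frechet M Y \<Longrightarrow> unit_frechet_scale M Y (frechet_scale M Y)"
  unfolding unit_frechet_def using frechet_scale_eqI by blast

lemma unit_frechet_scale_cmult:
  assumes "c > 0" "unit_frechet_scale M Y a"
  shows "unit_frechet_scale M (\<lambda>\<omega>. ennreal c * Y \<omega>) (c * a)"
  unfolding unit_frechet_scale_def
proof (intro conjI allI impI)
  show "0 \<le> c * a" using assms unfolding unit_frechet_scale_def by simp
  fix t :: real assume t: "t > 0"
  have "{\<omega>\<in>space M. ennreal c * Y \<omega> \<le> ennreal t} = {\<omega>\<in>space M. Y \<omega> \<le> ennreal (t / c)}"
    using ennreal_mult_le_iff_le_divide[OF assms(1) t] by auto
  also have "measure M \<dots> = exp (- a / (t / c))"
    using assms t by (simp add: unit_frechet_scale_cdf)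
  finally show "measure M {\<omega>\<in>space M. ennreal c * Y \<omega> \<le> ennreal t} = exp (- (c * a) / t)"
    using assms by simp
qed

lemma mono_mult_INF_le:
  fixes f :: "'a \<Rightarrow> ennreal"
  assumes "mono \<phi>" "x \<in> K" "K \<subseteq> L"
  shows "\<phi> K * (INF y\<in>K. f y) \<le> \<phi> L * f x"
  using assms by (intro mult_mono INF_lower) (auto simp: mono_def)

lemma extremal_integral_nested_step:
  fixes A B :: "'a::topological_space set"
  assumes mono: "mono \<phi>" and empty: "\<phi> {} = 0"
    and AB: "A \<subseteq> B" "compact A" "compact B" and ab: "a \<ge> 0" "b \<ge> 0"
  shows "extremal_integral (\<lambda>x. a * indicator A x + b * indicator B x) \<phi>
     = max (\<phi> A * ennreal (a + b)) (\<phi> B * ennreal b)"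
  (is "extremal_integral ?h \<phi> = ?R")
proof (rule antisym)
  show "extremal_integral ?h \<phi> \<le> ?R"
    unfolding extremal_integral_def
  proof (rule SUP_least)
    fix K :: "'a set"
    consider "K = {}" | x where "x \<in> K" "K \<subseteq> A"
      | x where "x \<in> K" "x \<notin> A" "K \<subseteq> B" | x where "x \<in> K" "x \<notin> B" by blast
    then show "\<phi> K * (INF x\<in>K. ennreal (?h x)) \<le> ?R"
    proof cases
      case 2
      then have "x \<in> A" "x \<in> B" using \<open>A \<subseteq> B\<close> by auto
      then have "\<phi> K * (INF x\<in>K. ennreal (?h x)) \<le> \<phi> A * ennreal (a + b)"
        using mono_mult_INF_le[OF mono 2, of "\<lambda>x. ennreal (?h x)"] by simp
      then show ?thesis by (simp add: le_max_iff_disj del: ennreal_plus)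
    next
      case 3
      then have "\<phi> K * (INF x\<in>K. ennreal (?h x)) \<le> \<phi> B * ennreal b"
        using mono_mult_INF_le[OF mono, of x K B "\<lambda>x. ennreal (?h x)"] by auto
      then show ?thesis by (simp add: le_max_iff_disj del: ennreal_plus)
    next
      case 4
      then have "x \<notin> A" using \<open>A \<subseteq> B\<close> by auto
      then have "\<phi> K * (INF x\<in>K. ennreal (?h x)) \<le> 0"
        using 4 mono_mult_INF_le[OF mono, of x K K "\<lambda>x. ennreal (?h x)"] by simp
      then show ?thesis by (rule order_trans) simp
    qed (use empty in simp)
  qed
next
  have hA: "ennreal (a + b) \<le> (INF x\<in>A. ennreal (?h x))"
    by (rule INF_greatest) (use AB in auto)
  have hB: "ennreal b \<le> (INF x\<in>B. ennreal (?h x))"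
    by (rule INF_greatest) (use AB ab in \<open>auto simp: indicator_def intro: ennreal_leI\<close>)
  have "\<phi> A * ennreal (a + b) \<le> extremal_integral ?h \<phi>"
    unfolding extremal_integral_def
    by (rule order_trans[OF mult_left_mono[OF hA]]) (use AB in \<open>auto intro: SUP_upper2\<close>)
  moreover have "\<phi> B * ennreal b \<le> extremal_integral ?h \<phi>"
    unfolding extremal_integral_def
    by (rule order_trans[OF mult_left_mono[OF hB]]) (use AB in \<open>auto intro: SUP_upper2\<close>)
  ultimately show "?R \<le> extremal_integral ?h \<phi>" by simp
qed

lemma extremal_integral_cmult_indicator:
  assumes "mono \<phi>" "\<phi> {} = 0" "compact A" "a \<ge> 0"
  shows "extremal_integral (\<lambda>x. a * indicator A x) \<phi> = \<phi> A * ennreal a"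
  using extremal_integral_nested_step[OF assms(1,2) order_refl assms(3,3,4) order_refl] by simp

lemma extremal_integral_indicator:
  assumes "mono \<phi>" "\<phi> {} = 0" "compact A"
  shows "extremal_integral (indicator A) \<phi> = \<phi> A"
  using extremal_integral_cmult_indicator[OF assms, of 1] by simp

lemma usc_fun_cmult_indicator:
  fixes A :: "'a::t2_space set"
  assumes A: "compact A" and a: "a \<ge> 0"
  shows "usc_fun (\<lambda>x. a * indicator A x)"
  unfolding usc_fun_def
proof (intro conjI allI)
  show "0 \<le> a * indicator A x" for x using a by simp
  have "range (\<lambda>x. a * indicator A x) \<subseteq> {0, a}" by (auto simp: indicator_def)
  then show "bounded (range (\<lambda>x. a * indicator A x))" by (rule bounded_subset[rotated]) simp
  fix t :: real
  have "{x. a * indicator A x < t} = (if t \<le> 0 then {} else if t \<le> a then - A else UNIV)"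
    using a by (auto simp: indicator_def)
  then show "open {x. a * indicator A x < t}"
    using A by (simp add: open_Compl compact_imp_closed)
next
  have "closure {x. a * indicator A x \<noteq> (0::real)} \<subseteq> A"
    using A by (intro closure_minimal) (auto simp: indicator_def compact_imp_closed)
  then show "compact (closure {x. a * indicator A x \<noteq> (0::real)})"
    using A by (metis closed_closure compact_Int_closed inf.absorb_iff2)
qed

lemma comonotone_nested_indicators:
  assumes "A \<subseteq> B" "a \<ge> 0" "b \<ge> 0"
  shows "comonotone (\<lambda>x. a * indicator A x) (\<lambda>x. b * indicator B x :: real)"
  unfolding comonotone_def using assms by (auto simp: indicator_def)

lemma max_stable_random_sup_measure: "max_stable M X \<Longrightarrow> random_sup_measure M X"
  by (simp add: max_stable_def)

lemma max_stable_unit_frechet_SUP: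
  fixes I :: "nat set"
  assumes "max_stable M X" "finite I" "\<And>i. i \<in> I \<Longrightarrow> compact (K i) \<and> u i \<ge> 0"
  shows "unit_frechet M (\<lambda>\<omega>. SUP i\<in>I. ennreal (u i) * X \<omega> (K i))"
  using assms unfolding max_stable_def by blast

lemma max_stable_sup_measure: "max_stable M X \<Longrightarrow> \<omega> \<in> space M \<Longrightarrow> sup_measure (X \<omega>)"
  by (rule random_sup_measure_sup_measure[OF max_stable_random_sup_measure])

lemma max_stable_ext_coeff:
  assumes "max_stable M X" "compact K"
  shows "unit_frechet_scale M (\<lambda>\<omega>. X \<omega> K) (ext_coeff M X K)"
proof -
  have "unit_frechet M (\<lambda>\<omega>. SUP i\<in>{0::nat}. ennreal 1 * X \<omega> K)"
    using max_stable_unit_frechet_SUP[OF assms(1), of "{0}" "\<lambda>_. K" "\<lambda>_. 1"] assms(2) by simp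
  then have u: "unit_frechet_scale M (\<lambda>\<omega>. X \<omega> K) (frechet_scale M (\<lambda>\<omega>. X \<omega> K))"
    by (simp add: unit_frechet_scale_frechet_scale)
  have "ext_coeff M X K = frechet_scale M (\<lambda>\<omega>. X \<omega> K)"
    unfolding ext_coeff_def tail_dep_def
  proof (rule frechet_scale_eqI[OF u])
    fix \<omega> assume "\<omega> \<in> space M"
    with assms(1) have "sup_measure (X \<omega>)" by (rule max_stable_sup_measure)
    then show "extremal_integral (indicator K) (X \<omega>) = X \<omega> K"
      by (intro extremal_integral_indicator sup_measure_mono sup_measure_empty assms(2))
  qed
  then show ?thesis using u by simp
qed

lemma max_stable_tail_dep_cmult_indicator:
  assumes "max_stable M X" "compact A" "c > 0"
  shows "tail_dep M X (\<lambda>x. c * indicator A x) = c * ext_coeff M X A"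
  unfolding tail_dep_def
proof (rule frechet_scale_eqI[OF unit_frechet_scale_cmult[OF assms(3) max_stable_ext_coeff[OF assms(1,2)]]])
  fix \<omega> assume "\<omega> \<in> space M"
  with assms(1) have "sup_measure (X \<omega>)" by (rule max_stable_sup_measure)
  then show "extremal_integral (\<lambda>x. c * indicator A x) (X \<omega>) = ennreal c * X \<omega> A"
    using assms(2,3)
    by (simp add: extremal_integral_cmult_indicator sup_measure_mono sup_measure_empty mult.commute)
qed

lemma max_stable_nested_step_scale:
  assumes "max_stable M X" "A \<subseteq> B" "compact A" "compact B" "a \<ge> 0" "b \<ge> 0"
  shows "unit_frechet_scale M (\<lambda>\<omega>. max (X \<omega> A * ennreal (a + b)) (X \<omega> B * ennreal b))
    (tail_dep M X (\<lambda>x. a * indicator A x + b * indicator B x))"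
proof -
  define Z where "Z \<omega> = max (X \<omega> A * ennreal (a + b)) (X \<omega> B * ennreal b)" for \<omega>
  have "unit_frechet M (\<lambda>\<omega>. SUP i\<in>{0::nat, 1}. ennreal (if i = 0 then a + b else b)
      * X \<omega> (if i = 0 then A else B))"
    using assms by (intro max_stable_unit_frechet_SUP) simp_all
  then have uZ: "unit_frechet_scale M Z (frechet_scale M Z)"
    unfolding Z_def
    by (simp add: sup_max unit_frechet_scale_frechet_scale mult.commute del: ennreal_plus)
  have "frechet_scale M Z = tail_dep M X (\<lambda>x. a * indicator A x + b * indicator B x)"
    unfolding tail_dep_def
  proof (rule frechet_scale_eqI[OF uZ, symmetric])
    fix \<omega> assume "\<omega> \<in> space M"
    with assms(1) have "sup_measure (X \<omega>)" by (rule max_stable_sup_measure)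
    then show "extremal_integral (\<lambda>x. a * indicator A x + b * indicator B x) (X \<omega>) = Z \<omega>"
      unfolding Z_def using assms(2-6)
      by (intro extremal_integral_nested_step sup_measure_mono sup_measure_empty)
  qed
  then show ?thesis using uZ unfolding Z_def by simp
qed

lemma CRSM_max_stable: "CRSM M X \<Longrightarrow> max_stable M X"
  by (simp add: CRSM_def)

lemma CRSM_tail_dep_add:
  "CRSM M X \<Longrightarrow> usc_fun f \<Longrightarrow> usc_fun g \<Longrightarrow> comonotone f g \<Longrightarrow>
    tail_dep M X (\<lambda>x. f x + g x) = tail_dep M X f + tail_dep M X g"
  by (simp add: CRSM_def)

lemma CRSM_tail_dep_nested_step:
  fixes X :: "'w \<Rightarrow> 'a::t2_space set \<Rightarrow> ennreal"
  assumes "CRSM M X" "A \<subseteq> B" "compact A" "compact B" "a > 0" "b > 0"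
  shows "tail_dep M X (\<lambda>x. a * indicator A x + b * indicator B x)
    = a * ext_coeff M X A + b * ext_coeff M X B"
proof -
  have "tail_dep M X (\<lambda>x. a * indicator A x + b * indicator B x)
      = tail_dep M X (\<lambda>x. a * indicator A x) + tail_dep M X (\<lambda>x. b * indicator B x)"
    using assms
    by (intro CRSM_tail_dep_add usc_fun_cmult_indicator comonotone_nested_indicators) simp_all
  then show ?thesis
    using assms by (simp add: max_stable_tail_dep_cmult_indicator CRSM_max_stable)
qed

text \<open>Comonotone additivity enters the proof only through this joint law.\<close>

lemma CRSM_joint_cdf:
  fixes X :: "'w \<Rightarrow> 'a::t2_space set \<Rightarrow> ennreal"
  assumes crsm: "CRSM M X" and A: "compact A" and B: "compact B" and AB: "A \<subseteq> B"
    and rs: "0 < r" "r < s"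
  shows "measure M {\<omega>\<in>space M. X \<omega> A \<le> ennreal r \<and> X \<omega> B \<le> ennreal s}
     = exp (- (ext_coeff M X A * (1/r - 1/s) + ext_coeff M X B / s))"
proof -
  define a where "a = 1/r - 1/s"
  define b where "b = 1/s"
  have a: "a > 0" and b: "b > 0" and ab: "a + b = 1 / r"
    using rs unfolding a_def b_def by (auto simp: field_simps)
  have "y * ennreal (a + b) \<le> 1 \<longleftrightarrow> y \<le> ennreal r" for y
    using ennreal_mult_le_iff_le_divide[of "a + b" 1 y] a b ab rs
    by (simp add: mult.commute del: ennreal_plus)
  moreover have "y * ennreal b \<le> 1 \<longleftrightarrow> y \<le> ennreal s" for y
    using ennreal_mult_le_iff_le_divide[of b 1 y] b rs unfolding b_def by (simp add: mult.commute)
  ultimately have "{\<omega>\<in>space M. X \<omega> A \<le> ennreal r \<and> X \<omega> B \<le> ennreal s}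
      = {\<omega>\<in>space M. max (X \<omega> A * ennreal (a + b)) (X \<omega> B * ennreal b) \<le> ennreal 1}"
    by simp
  also have "measure M \<dots> = exp (- (a * ext_coeff M X A + b * ext_coeff M X B))"
    using unit_frechet_scale_cdf[OF max_stable_nested_step_scale[OF CRSM_max_stable[OF crsm]
        AB A B less_imp_le[OF a] less_imp_le[OF b]], of 1]
    by (simp add: CRSM_tail_dep_nested_step[OF crsm AB A B a b] del: ennreal_plus)
  finally show ?thesis unfolding a_def b_def by (simp add: mult.commute)
qed

lemma (in prob_space) prob_Collect_mono:
  assumes "\<And>\<omega>. \<omega> \<in> space M \<Longrightarrow> P \<omega> \<Longrightarrow> Q \<omega>" "{\<omega>\<in>space M. Q \<omega>} \<in> events"
  shows "prob {\<omega>\<in>space M. P \<omega>} \<le> prob {\<omega>\<in>space M. Q \<omega>}"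
  using assms by (intro finite_measure_mono) auto

locale nested_frechet_pair = prob_space +
  fixes U W :: "'a \<Rightarrow> ennreal" and a b :: real
  assumes measurable_U [measurable]: "U \<in> borel_measurable M"
    and measurable_W [measurable]: "W \<in> borel_measurable M"
    and U_le_W: "\<omega> \<in> space M \<Longrightarrow> U \<omega> \<le> W \<omega>"
    and W_finite: "\<omega> \<in> space M \<Longrightarrow> W \<omega> < \<top>"
    and W_cdf: "0 < s \<Longrightarrow> prob {\<omega>\<in>space M. W \<omega> \<le> ennreal s} = exp (- b / s)"
    and joint_cdf: "0 < r \<Longrightarrow> r < s \<Longrightarrow>
      prob {\<omega>\<in>space M. U \<omega> \<le> ennreal r \<and> W \<omega> \<le> ennreal s} = exp (- (a * (1/r - 1/s) + b / s))"
begin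

lemma scale_bounds: "0 \<le> a" "a \<le> b"
proof -
  have "prob {\<omega>\<in>space M. W \<omega> \<le> ennreal 1}
      \<le> prob {\<omega>\<in>space M. U \<omega> \<le> ennreal 1 \<and> W \<omega> \<le> ennreal 2}"
  proof (rule prob_Collect_mono)
    show "U \<omega> \<le> ennreal 1 \<and> W \<omega> \<le> ennreal 2" if "\<omega> \<in> space M" "W \<omega> \<le> ennreal 1" for \<omega>
      using that U_le_W order_trans ennreal_leI[of 1 2] by fastforce
  qed measurable
  then have "exp (- b) \<le> exp (- (a / 2 + b / 2))"
    using W_cdf[of 1] joint_cdf[of 1 2] by simp
  moreover have "prob {\<omega>\<in>space M. U \<omega> \<le> ennreal 1 \<and> W \<omega> \<le> ennreal 2}
      \<le> prob {\<omega>\<in>space M. W \<omega> \<le> ennreal 2}"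
    by (rule prob_Collect_mono) auto
  then have "exp (- (a / 2 + b / 2)) \<le> exp (- b / 2)"
    using W_cdf[of 2] joint_cdf[of 1 2] by simp
  ultimately show "0 \<le> a" "a \<le> b" by simp_all
qed

text \<open>The increment \<open>exp(-b/s) - exp(-a(1/r - 1/s) - b/s)\<close> factors as
\<open>q (exp(-a/s) - exp(-a/r))\<close> with \<open>q = exp(-(b - a)/s) \<ge> exp(-(b - a)/\<epsilon>)\<close>.\<close>

lemma exp_cdf_grid_ineq:
  assumes "0 < r" "r \<le> s" "0 < \<epsilon>" "\<epsilon> \<le> s"
  shows "exp (- (b - a) / \<epsilon>) * exp (- a / s)
    \<le> exp (- (b - a) / \<epsilon>) * exp (- a / r) + (exp (- b / s) - exp (- (a * (1/r - 1/s) + b / s)))"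
proof -
  define q where "q = exp (- (b - a) / s)"
  define c where "c = exp (- (b - a) / \<epsilon>)"
  have q1: "exp (- b / s) = q * exp (- a / s)"
    unfolding q_def exp_add[symmetric] using assms by (simp add: field_simps)
  have q2: "exp (- (a * (1/r - 1/s) + b / s)) = q * exp (- a / r)"
    unfolding q_def exp_add[symmetric] using assms by (simp add: field_simps)
  have "- (b - a) / \<epsilon> \<le> - (b - a) / s"
    using scale_bounds assms by (intro divide_left_mono_neg) auto
  then have "c \<le> q" unfolding q_def c_def by simp
  moreover have "a / s \<le> a / r" using scale_bounds assms by (intro divide_left_mono) auto
  then have "exp (- a / r) \<le> exp (- a / s)" by simp
  ultimately have "0 \<le> (q - c) * (exp (- a / s) - exp (- a / r))" by simp
  then show ?thesis unfolding q1 q2 c_def[symmetric] by (simp add: algebra_simps)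
qed

lemma prob_gap_grid_step:
  assumes "0 < \<epsilon>" "0 < r"
  shows "prob {\<omega>\<in>space M. enn2real (W \<omega>) - enn2real (U \<omega>) \<le> \<epsilon> \<and> U \<omega> \<le> ennreal r}
      + (exp (- b / (r + \<epsilon>)) - exp (- (a * (1/r - 1/(r + \<epsilon>)) + b / (r + \<epsilon>))))
    \<le> prob {\<omega>\<in>space M. enn2real (W \<omega>) - enn2real (U \<omega>) \<le> \<epsilon> \<and> U \<omega> \<le> ennreal (r + \<epsilon>)}"
proof -
  define s where "s = r + \<epsilon>"
  define T where "T t = {\<omega>\<in>space M. enn2real (W \<omega>) - enn2real (U \<omega>) \<le> \<epsilon> \<and> U \<omega> \<le> ennreal t}"
    for t
  define J where "J = {\<omega>\<in>space M. U \<omega> \<le> ennreal r \<and> W \<omega> \<le> ennreal s}"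
  define D where "D = {\<omega>\<in>space M. W \<omega> \<le> ennreal s} - J"
  have rs: "0 < r" "r < s" using assms unfolding s_def by auto
  have [measurable]: "T t \<in> events" "J \<in> events" "D \<in> events" for t
    unfolding T_def J_def D_def by measurable
  have "prob D = prob {\<omega>\<in>space M. W \<omega> \<le> ennreal s} - prob J"
    unfolding D_def by (rule finite_measure_Diff) (auto simp: J_def)
  then have prob_D: "prob D = exp (- b / s) - exp (- (a * (1/r - 1/s) + b / s))"
    using W_cdf[of s] joint_cdf[OF rs] rs unfolding J_def by simp
  have "T r \<union> D \<subseteq> T s"
  proof
    fix \<omega> assume \<omega>: "\<omega> \<in> T r \<union> D"
    then have space: "\<omega> \<in> space M" unfolding T_def D_def by auto
    have U_fin: "U \<omega> < \<top>" using U_le_W[OF space] W_finite[OF space] by (rule le_less_trans)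
    show "\<omega> \<in> T s"
    proof (cases "\<omega> \<in> D")
      case True
      then have W_le: "W \<omega> \<le> ennreal s" and U_gt: "\<not> U \<omega> \<le> ennreal r"
        unfolding D_def J_def by auto
      have "enn2real (W \<omega>) \<le> s" using W_le rs by (intro enn2real_leI) auto
      moreover have "r < enn2real (U \<omega>)"
        using enn2real_le_iff[OF U_fin rs(1)] U_gt by (metis not_le)
      moreover have "U \<omega> \<le> ennreal s" using U_le_W[OF space] W_le by (rule order_trans)
      ultimately show ?thesis using space unfolding T_def s_def by auto
    next
      case False
      then have "\<omega> \<in> T r" using \<omega> by blast
      then show ?thesis using rs unfolding T_def by (auto intro: order_trans ennreal_leI)
    qed
  qed
  then have "prob (T r \<union> D) \<le> prob (T s)" by (rule finite_measure_mono) measurable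
  moreover have "T r \<inter> D = {}" unfolding T_def D_def J_def by auto
  then have "prob (T r \<union> D) = prob (T r) + prob D" by (intro finite_measure_Union) measurable
  ultimately have "prob (T r) + prob D \<le> prob (T s)" by simp
  then show ?thesis using prob_D unfolding T_def s_def by simp
qed

lemma prob_gap_grid_bound:
  assumes "0 < \<epsilon>"
  shows "exp (- (b - a) / \<epsilon>) * exp (- a / (real (Suc m) * \<epsilon>))
    \<le> prob {\<omega>\<in>space M. enn2real (W \<omega>) - enn2real (U \<omega>) \<le> \<epsilon> \<and> U \<omega> \<le> ennreal (real (Suc m) * \<epsilon>)}"
proof (induction m)
  case 0
  have "prob {\<omega>\<in>space M. W \<omega> \<le> ennreal \<epsilon>}
      \<le> prob {\<omega>\<in>space M. enn2real (W \<omega>) - enn2real (U \<omega>) \<le> \<epsilon> \<and> U \<omega> \<le> ennreal \<epsilon>}"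
  proof (rule prob_Collect_mono)
    fix \<omega> assume \<omega>: "\<omega> \<in> space M" "W \<omega> \<le> ennreal \<epsilon>"
    then have "enn2real (W \<omega>) \<le> \<epsilon>" using assms by (intro enn2real_leI) auto
    then show "enn2real (W \<omega>) - enn2real (U \<omega>) \<le> \<epsilon> \<and> U \<omega> \<le> ennreal \<epsilon>"
      using enn2real_nonneg[of "U \<omega>"] U_le_W[OF \<omega>(1)] \<omega>(2)
      by (intro conjI) (linarith, rule order_trans)
  qed measurable
  moreover have "exp (- (b - a) / \<epsilon>) * exp (- a / \<epsilon>) = exp (- b / \<epsilon>)"
    by (simp add: exp_add[symmetric] diff_divide_distrib)
  ultimately show ?case using W_cdf[of \<epsilon>] assms by simp
next
  case (Suc m)
  define r where "r = real (Suc m) * \<epsilon>"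
  have r: "0 < r" "r + \<epsilon> = real (Suc (Suc m)) * \<epsilon>"
    using assms unfolding r_def by (simp_all add: algebra_simps add_pos_nonneg)
  have "exp (- (b - a) / \<epsilon>) * exp (- a / (r + \<epsilon>))
      \<le> exp (- (b - a) / \<epsilon>) * exp (- a / r)
        + (exp (- b / (r + \<epsilon>)) - exp (- (a * (1/r - 1/(r + \<epsilon>)) + b / (r + \<epsilon>))))"
    using r(1) assms by (intro exp_cdf_grid_ineq) auto
  also have "\<dots> \<le> prob {\<omega>\<in>space M. enn2real (W \<omega>) - enn2real (U \<omega>) \<le> \<epsilon> \<and> U \<omega> \<le> ennreal r}
        + (exp (- b / (r + \<epsilon>)) - exp (- (a * (1/r - 1/(r + \<epsilon>)) + b / (r + \<epsilon>))))"
    using Suc.IH unfolding r_def by simp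
  also have "\<dots> \<le> prob {\<omega>\<in>space M. enn2real (W \<omega>) - enn2real (U \<omega>) \<le> \<epsilon> \<and> U \<omega> \<le> ennreal (r + \<epsilon>)}"
    by (rule prob_gap_grid_step[OF assms r(1)])
  finally show ?case unfolding r(2) .
qed

lemma prob_gap_le:
  assumes "0 < \<epsilon>"
  shows "exp (- (b - a) / \<epsilon>) \<le> prob {\<omega>\<in>space M. enn2real (W \<omega>) - enn2real (U \<omega>) \<le> \<epsilon>}"
proof (rule LIMSEQ_le_const2)
  have "(\<lambda>m. exp (- (b - a) / \<epsilon>) * exp (- (a / \<epsilon>) * inverse (real (Suc m))))
      \<longlonglongrightarrow> exp (- (b - a) / \<epsilon>) * exp (- (a / \<epsilon>) * 0)"
    by (intro tendsto_intros LIMSEQ_inverse_real_of_nat)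
  then show "(\<lambda>m. exp (- (b - a) / \<epsilon>) * exp (- a / (real (Suc m) * \<epsilon>)))
      \<longlonglongrightarrow> exp (- (b - a) / \<epsilon>)"
    by (simp add: field_simps)
  show "\<exists>N. \<forall>m\<ge>N. exp (- (b - a) / \<epsilon>) * exp (- a / (real (Suc m) * \<epsilon>))
      \<le> prob {\<omega>\<in>space M. enn2real (W \<omega>) - enn2real (U \<omega>) \<le> \<epsilon>}"
  proof (intro exI allI impI)
    fix m :: nat
    show "exp (- (b - a) / \<epsilon>) * exp (- a / (real (Suc m) * \<epsilon>))
        \<le> prob {\<omega>\<in>space M. enn2real (W \<omega>) - enn2real (U \<omega>) \<le> \<epsilon>}"
      using prob_gap_grid_bound[OF assms, of m] by (rule order_trans) (rule prob_Collect_mono, auto)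
  qed
qed

end

lemma CRSM_prob_diff_le:
  fixes X :: "'w \<Rightarrow> 'a::t2_space set \<Rightarrow> ennreal"
  assumes crsm: "CRSM M X" and K1: "compact K1" and K2: "compact K2" and "0 < \<epsilon>"
  shows "exp (- (ext_coeff M X (K1 \<union> K2) - ext_coeff M X K2) / \<epsilon>)
    \<le> measure M {\<omega>\<in>space M. enn2real (X \<omega> K1) - enn2real (X \<omega> K2) \<le> \<epsilon>}"
proof -
  define B where "B = K1 \<union> K2"
  have B: "compact B" unfolding B_def using K1 K2 by blast
  have ms: "max_stable M X" using crsm by (rule CRSM_max_stable)
  have rsm: "random_sup_measure M X" using ms by (rule max_stable_random_sup_measure)
  have sample: "sup_measure (X \<omega>)" if "\<omega> \<in> space M" for \<omega>
    using rsm that by (rule random_sup_measure_sup_measure)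
  have sample_mono: "X \<omega> K \<le> X \<omega> B" if "\<omega> \<in> space M" "K \<subseteq> B" for \<omega> K
    using sup_measure_mono[OF sample[OF that(1)]] that(2) by (simp add: mono_def)
  have sample_finite: "X \<omega> B < \<top>" if "\<omega> \<in> space M" for \<omega>
    using sup_measure_compact_finite[OF sample[OF that] B] by simp
  note [measurable] = random_sup_measure_borel_measurable[OF rsm K1]
    random_sup_measure_borel_measurable[OF rsm K2] random_sup_measure_borel_measurable[OF rsm B]
  interpret prob_space M using rsm unfolding random_sup_measure_def by blast
  interpret nested_frechet_pair M "\<lambda>\<omega>. X \<omega> K2" "\<lambda>\<omega>. X \<omega> B" "ext_coeff M X K2" "ext_coeff M X B"
  proof
    show "X \<omega> K2 \<le> X \<omega> B" if "\<omega> \<in> space M" for \<omega>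
      using that by (rule sample_mono) (simp add: B_def)
    show "prob {\<omega>\<in>space M. X \<omega> B \<le> ennreal s} = exp (- ext_coeff M X B / s)" if "0 < s" for s
      using unit_frechet_scale_cdf[OF max_stable_ext_coeff[OF ms B] that] .
    show "prob {\<omega>\<in>space M. X \<omega> K2 \<le> ennreal r \<and> X \<omega> B \<le> ennreal s}
        = exp (- (ext_coeff M X K2 * (1/r - 1/s) + ext_coeff M X B / s))" if "0 < r" "r < s" for r s
      using CRSM_joint_cdf[OF crsm K2 B _ that] by (simp add: B_def)
  qed (use sample_finite in auto)
  have "exp (- (ext_coeff M X B - ext_coeff M X K2) / \<epsilon>)
      \<le> prob {\<omega>\<in>space M. enn2real (X \<omega> B) - enn2real (X \<omega> K2) \<le> \<epsilon>}"
    using \<open>0 < \<epsilon>\<close> by (rule prob_gap_le)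
  also have "\<dots> \<le> prob {\<omega>\<in>space M. enn2real (X \<omega> K1) - enn2real (X \<omega> K2) \<le> \<epsilon>}"
  proof (rule prob_Collect_mono)
    fix \<omega> assume "\<omega> \<in> space M" "enn2real (X \<omega> B) - enn2real (X \<omega> K2) \<le> \<epsilon>"
    moreover from this have "enn2real (X \<omega> K1) \<le> enn2real (X \<omega> B)"
      by (intro enn2real_mono sample_mono sample_finite) (auto simp: B_def)
    ultimately show "enn2real (X \<omega> K1) - enn2real (X \<omega> K2) \<le> \<epsilon>" by simp
  qed measurable
  finally show ?thesis unfolding B_def .
qed

lemma (in prob_space) prob_abs_diff_gt_le:
  fixes Y Z :: "'a \<Rightarrow> real"
  assumes [measurable]: "Y \<in> borel_measurable M" "Z \<in> borel_measurable M"
    and YZ: "exp (- x / \<epsilon>) \<le> prob {\<omega>\<in>space M. Y \<omega> - Z \<omega> \<le> \<epsilon>}"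
    and ZY: "exp (- y / \<epsilon>) \<le> prob {\<omega>\<in>space M. Z \<omega> - Y \<omega> \<le> \<epsilon>}"
  shows "prob {\<omega>\<in>space M. \<bar>Y \<omega> - Z \<omega>\<bar> > \<epsilon>} \<le> (x + y) / \<epsilon>"
proof -
  define T1 where "T1 = {\<omega>\<in>space M. Y \<omega> - Z \<omega> \<le> \<epsilon>}"
  define T2 where "T2 = {\<omega>\<in>space M. Z \<omega> - Y \<omega> \<le> \<epsilon>}"
  have [measurable]: "T1 \<in> events" "T2 \<in> events" unfolding T1_def T2_def by measurable
  have "prob {\<omega>\<in>space M. \<bar>Y \<omega> - Z \<omega>\<bar> > \<epsilon>} \<le> prob ((space M - T1) \<union> (space M - T2))"
    by (rule finite_measure_mono) (auto simp: T1_def T2_def)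
  also have "\<dots> \<le> prob (space M - T1) + prob (space M - T2)"
    by (rule measure_Un_le) auto
  also have "\<dots> = (1 - prob T1) + (1 - prob T2)"
    by (simp add: prob_compl)
  also have "\<dots> \<le> x / \<epsilon> + y / \<epsilon>"
    using YZ ZY exp_ge_add_one_self[of "- x / \<epsilon>"] exp_ge_add_one_self[of "- y / \<epsilon>"]
    unfolding T1_def T2_def by simp
  finally show ?thesis by (simp add: add_divide_distrib)
qed

theorem mainTheorem16:
  fixes M :: "'w measure"
    and X :: "'w \<Rightarrow> 'a::{t2_space, second_countable_topology} set \<Rightarrow> ennreal"
  assumes "locally_compact_space (euclidean :: 'a topology)"
    and "CRSM M X"
    and "compact K1" and "compact K2"
    and "(\<epsilon>::real) > 0"
  shows "measure M {\<omega>\<in>space M. enn2real (X \<omega> K1) - enn2real (X \<omega> K2) \<le> \<epsilon>}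
           \<ge> exp (- (ext_coeff M X (K1 \<union> K2) - ext_coeff M X K2) / \<epsilon>) \<and>
         measure M {\<omega>\<in>space M. \<bar>enn2real (X \<omega> K1) - enn2real (X \<omega> K2)\<bar> > \<epsilon>}
           \<le> (2 * ext_coeff M X (K1 \<union> K2) - ext_coeff M X K1 - ext_coeff M X K2) / \<epsilon>"
proof
  note crsm = assms(2) and K = assms(3,4) and \<epsilon> = assms(5)
  have rsm: "random_sup_measure M X"
    using crsm by (intro max_stable_random_sup_measure CRSM_max_stable)
  interpret prob_space M using rsm unfolding random_sup_measure_def by blast
  note [measurable] = random_sup_measure_borel_measurable[OF rsm K(1)]
    random_sup_measure_borel_measurable[OF rsm K(2)]
  show bound12: "exp (- (ext_coeff M X (K1 \<union> K2) - ext_coeff M X K2) / \<epsilon>)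
      \<le> prob {\<omega>\<in>space M. enn2real (X \<omega> K1) - enn2real (X \<omega> K2) \<le> \<epsilon>}"
    using CRSM_prob_diff_le[OF crsm K \<epsilon>] .
  have bound21: "exp (- (ext_coeff M X (K1 \<union> K2) - ext_coeff M X K1) / \<epsilon>)
      \<le> prob {\<omega>\<in>space M. enn2real (X \<omega> K2) - enn2real (X \<omega> K1) \<le> \<epsilon>}"
    using CRSM_prob_diff_le[OF crsm K(2,1) \<epsilon>] by (simp add: Un_commute)
  have "prob {\<omega>\<in>space M. \<bar>enn2real (X \<omega> K1) - enn2real (X \<omega> K2)\<bar> > \<epsilon>}
      \<le> ((ext_coeff M X (K1 \<union> K2) - ext_coeff M X K2) + (ext_coeff M X (K1 \<union> K2) - ext_coeff M X K1)) / \<epsilon>"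
    using bound12 bound21 by (intro prob_abs_diff_gt_le) measurable
  then show "prob {\<omega>\<in>space M. \<bar>enn2real (X \<omega> K1) - enn2real (X \<omega> K2)\<bar> > \<epsilon>}
      \<le> (2 * ext_coeff M X (K1 \<union> K2) - ext_coeff M X K1 - ext_coeff M X K2) / \<epsilon>"
    by (simp add: algebra_simps)
qed

end
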